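(* Let $T\in\mathbb{N}$, $\alpha\in(0,1)$, $\lambda\ge0$, $\delta\in(0,1)$, and let $\mathcal{H}=\{k/(H-1):k=0,\dots,H-1\}$ with $H\ge2$. Run the ExAUL algorithm (described in the context) with $\eta=2\gamma=\sqrt{\ln|\mathcal{H}|/T}$ against an adaptive adversary. Then with probability at least $1-\delta$, $$\mathrm{Reg}_T:=\sum_{t=1}^T\ell_t(\tau_t)-\min_{\tau\in\mathcal{H}}\sum_{t=1}^T\ell_t(\tau)\le4\sqrt{T\ln|\mathcal{H}|}+\Big(1+\sqrt{\frac{T}{\ln|\mathcal{H}|}}\Big)\ln\frac2\delta.$$
   Context: Protocol. For $t=1,\dots,T$: an adaptive adversary chooses an input $\mathbf{x}_t$ (determining a score $f_t=f(\mathbf{x}_t,G(\mathbf{x}_t))\in[0,1)$ for a fixed generator $G$ and fixed scoring function $f$) and a feedback value $c_t\in[0,1]$ for the answer $G(\mathbf{x}_t)$; these may depend on $\tau_1,\dots,\tau_{t-1}$ but not on $\tau_t$. The learner picks $\tau_t\in\mathcal{H}$; it answers if $f_t\ge\tau_t$ and outputs IDK otherwise; it observes $f_t$ and, as partial feedback, $e_t$, which equals $c_t$ when it answers. Losses: for $\tau\in\mathcal{H}$, $a_t(\tau)=\mathbf{1}(f_t<\tau)$, $d_t(\tau,\alpha)=\mathbf{1}(f_t\ge\tau)c_t-\alpha\mathbf{1}(f_t\ge\tau)+\alpha$, $\ell_t(\tau)=\frac{a_t(\tau)+\lambda d_t(\tau,\alpha)}{1+\lambda}\in[0,1]$. ExAUL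 algorithm (parameters $\eta,\gamma>0$): $w_1(\tau)=1/|\mathcal{H}|$. At round $t$: $p_t(\tau)=w_t(\tau)/\sum_{\tau'}w_t(\tau')$; draw $\tau_t\sim p_t$; observe $f_t,e_t$; let $\mathcal{H}_t(\tau')=\{\tau\in\mathcal{H}:\tau\le f_t\}$ if $f_t\ge\tau'$ and $\{\tau\in\mathcal{H}:\tau>f_t\}$ otherwise; set for all $\tau\in\mathcal{H}$ $$\tilde\ell_t(\tau)=\frac{\ell_t(\tau)\,\mathbf{1}(\tau\in\mathcal{H}_t(\tau_t))}{\gamma+\sum_{\bar\tau\in\mathcal{H}_t(\tau_t)}\mathbf{1}(\tau\in\mathcal{H}_t(\bar\tau))\,p_t(\bar\tau)};$$ update $w_{t+1}(\tau)\propto\exp(-\eta\sum_{s=1}^t\tilde\ell_s(\tau))$. *)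

theory Defs
  imports Complex_Main
begin

definition grid :: "nat \<Rightarrow> real set" where
  "grid H = (\<lambda>k. real k / real (H - 1)) ` {0..<H}"

text \<open>Loss l_t(tau) = (a_t(tau) + lam d_t(tau,alpha)) / (1 + lam), for score f and feedback c.\<close>
definition loss :: "real \<Rightarrow> real \<Rightarrow> real \<Rightarrow> real \<Rightarrow> real \<Rightarrow> real" where
  "loss lam \<alpha> f c \<tau> =
     ((if f < \<tau> then 1 else 0)
      + lam * ((if f \<ge> \<tau> then 1 else 0) * c - \<alpha> * (if f \<ge> \<tau> then 1 else 0) + \<alpha>))
     / (1 + lam)"

definition fbset :: "real set \<Rightarrow> real \<Rightarrow> real \<Rightarrow> real set" where
  "fbset Hs f \<tau>' = (if f \<ge> \<tau>' then {\<tau>\<in>Hs. \<tau> \<le> f} else {\<tau>\<in>Hs. \<tau> > f})"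

definition expw :: "real set \<Rightarrow> real \<Rightarrow> (real \<Rightarrow> real) \<Rightarrow> real \<Rightarrow> real" where
  "expw Hs \<eta> L \<tau> = exp (- \<eta> * L \<tau>) / (\<Sum>\<tau>''\<in>Hs. exp (- \<eta> * L \<tau>''))"

text \<open>Implicit-exploration loss estimate; p = current distribution, l = true loss function,
  f = score, tt = drawn threshold.\<close>
definition est_loss ::
  "real set \<Rightarrow> real \<Rightarrow> (real \<Rightarrow> real) \<Rightarrow> (real \<Rightarrow> real) \<Rightarrow> real \<Rightarrow> real \<Rightarrow> real \<Rightarrow> real" where
  "est_loss Hs \<gamma> p l f tt \<tau> =
     (if \<tau> \<in> fbset Hs f tt then
        l \<tau> / (\<gamma> + (\<Sum>\<tau>b\<in>fbset Hs f tt. (if \<tau> \<in> fbset Hs f \<tau>b then p \<tau>b else 0)))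
      else 0)"

text \<open>Cumulative estimated loss after n rounds along the threshold history h
  (h ! s is the threshold drawn at round s+1).  F and Cf give the adversary's score and
  feedback at a round as functions of the learner's previous thresholds.\<close>
primrec cumL ::
  "real set \<Rightarrow> real \<Rightarrow> real \<Rightarrow> real \<Rightarrow> real \<Rightarrow> (real list \<Rightarrow> real) \<Rightarrow> (real list \<Rightarrow> real)
   \<Rightarrow> real list \<Rightarrow> nat \<Rightarrow> real \<Rightarrow> real" where
  "cumL Hs \<eta> \<gamma> lam \<alpha> F Cf h 0 = (\<lambda>_. 0)"
| "cumL Hs \<eta> \<gamma> lam \<alpha> F Cf h (Suc n) =
     (\<lambda>\<tau>. cumL Hs \<eta> \<gamma> lam \<alpha> F Cf h n \<tau>
         + est_loss Hs \<gamma> (expw Hs \<eta> (cumL Hs \<eta> \<gamma> lam \<alpha> F Cf h n))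
             (loss lam \<alpha> (F (take n h)) (Cf (take n h))) (F (take n h)) (h ! n) \<tau>)"

definition exaul_p ::
  "real set \<Rightarrow> real \<Rightarrow> real \<Rightarrow> real \<Rightarrow> real \<Rightarrow> (real list \<Rightarrow> real) \<Rightarrow> (real list \<Rightarrow> real)
   \<Rightarrow> real list \<Rightarrow> nat \<Rightarrow> real \<Rightarrow> real" where
  "exaul_p Hs \<eta> \<gamma> lam \<alpha> F Cf h n = expw Hs \<eta> (cumL Hs \<eta> \<gamma> lam \<alpha> F Cf h n)"

definition seq_prob ::
  "real set \<Rightarrow> real \<Rightarrow> real \<Rightarrow> real \<Rightarrow> real \<Rightarrow> (real list \<Rightarrow> real) \<Rightarrow> (real list \<Rightarrow> real)
   \<Rightarrow> nat \<Rightarrow> real list \<Rightarrow> real" where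
  "seq_prob Hs \<eta> \<gamma> lam \<alpha> F Cf T h = (\<Prod>n<T. exaul_p Hs \<eta> \<gamma> lam \<alpha> F Cf h n (h ! n))"

definition regret ::
  "real set \<Rightarrow> real \<Rightarrow> real \<Rightarrow> (real list \<Rightarrow> real) \<Rightarrow> (real list \<Rightarrow> real) \<Rightarrow> nat \<Rightarrow> real list \<Rightarrow> real" where
  "regret Hs lam \<alpha> F Cf T h =
     (\<Sum>n<T. loss lam \<alpha> (F (take n h)) (Cf (take n h)) (h ! n))
     - (MIN \<tau>\<in>Hs. \<Sum>n<T. loss lam \<alpha> (F (take n h)) (Cf (take n h)) \<tau>)"

end

theory Submission
  imports Defs
begin

(* The regret of ExAUL is the regret of exponential weights run on the implicit-exploration
   estimates, at most ln|H|/eta + (eta/2) sum_t sum_tau p_t(tau) est_t(tau)^2, plus the error of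
   the estimates.  The loss of a threshold depends only on which side of f_t it lies, so losses
   are constant on the two feedback cells {tau <= f_t} and {tau > f_t}; the second moment is then
   bounded by v_t = l_t(tau_t) / (gamma + p_t(H_t(tau_t))).  The elementary inequality
   P exp(2 gamma l / (gamma + P)) <= P + 2 gamma l makes exp(2 gamma sum_t (est_t(tau) - l_t(tau)))
   and exp(2 gamma sum_t (v_t - 2)) supermartingales under the learner's randomisation, and
   Markov's inequality applied to an average of them controls both errors simultaneously with
   probability 1 - delta.  The choice eta = 2 gamma = sqrt(ln|H| / T) balances the terms. *)

lemma exp_minus_le_quadratic:
  fixes x :: real
  assumes "0 \<le> x"
  shows "exp (- x) \<le> 1 - x + x^2 / 2"
proof -
  let ?f = "\<lambda>x::real. 1 - x + x^2 / 2 - exp (- x)"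
  have "?f 0 \<le> ?f x"
  proof (rule DERIV_nonneg_imp_nondecreasing[OF assms])
    fix y :: real
    show "\<exists>d. (?f has_real_derivative d) (at y) \<and> 0 \<le> d"
    proof (intro exI conjI)
      show "(?f has_real_derivative (- 1 + y + exp (- y))) (at y)"
        by (auto intro!: derivative_eq_intros)
      show "0 \<le> - 1 + y + exp (- y)"
        using exp_ge_add_one_self[of "- y"] by linarith
    qed
  qed
  then show ?thesis by simp
qed

lemma pade_le_ln_add_one:
  fixes z :: real
  assumes "0 \<le> z"
  shows "2 * z / (2 + z) \<le> ln (1 + z)"
proof -
  let ?f = "\<lambda>z::real. ln (1 + z) - 2 * z / (2 + z)"
  have "?f 0 \<le> ?f z"
  proof (rule DERIV_nonneg_imp_nondecreasing[OF assms])
    fix y :: real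
    assume "0 \<le> y" "y \<le> z"
    then have y: "0 < 1 + y" "0 < 2 + y" by auto
    show "\<exists>d. (?f has_real_derivative d) (at y) \<and> 0 \<le> d"
    proof (intro exI conjI)
      show "(?f has_real_derivative (1 / (1 + y) - 4 / (2 + y)^2)) (at y)"
        using y by (auto intro!: derivative_eq_intros) (simp_all add: divide_simps power2_eq_square)
      have "1 / (1 + y) - 4 / (2 + y)^2 = y^2 / ((1 + y) * (2 + y)^2)"
        using y by (simp add: field_simps) (simp add: power2_eq_square algebra_simps)
      then show "0 \<le> 1 / (1 + y) - 4 / (2 + y)^2"
        using y by simp
    qed
  qed
  then show ?thesis by simp
qed

lemma mult_exp_ix_le:
  fixes P l g :: real
  assumes "0 \<le> P" "0 \<le> l" "l \<le> 1" "0 < g"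
  shows "P * exp (2 * g * l / (g + P)) \<le> P + 2 * g * l"
proof (cases "P = 0")
  case True
  then show ?thesis using assms by simp
next
  case False
  with assms have P: "0 < P" by simp
  define z where "z = 2 * g * l / P"
  have z: "0 \<le> z" using assms P by (simp add: z_def)
  have "2 * g * l / (g + P) \<le> 2 * g * l / (P + g * l)"
    using assms P mult_left_le[of l g] by (intro divide_left_mono mult_pos_pos add_pos_nonneg) auto
  also have "\<dots> = 2 * z / (2 + z)"
  proof -
    have "0 < P + g * l" "0 < 2 + z" using P assms z by (simp_all add: add_pos_nonneg)
    then show ?thesis using P by (simp add: z_def field_simps)
  qed
  also have "\<dots> \<le> ln (1 + z)"
    using z by (rule pade_le_ln_add_one)
  finally have "exp (2 * g * l / (g + P)) \<le> 1 + z"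
    using z by (simp add: ln_ge_iff[symmetric] add_pos_nonneg)
  then have "P * exp (2 * g * l / (g + P)) \<le> P * (1 + z)"
    using P by simp
  also have "\<dots> = P + 2 * g * l"
    using P by (simp add: z_def field_simps)
  finally show ?thesis .
qed

lemma fbset_subset: "fbset K f t' \<subseteq> K"
  by (auto simp: fbset_def)

lemma fbset_eq_if_mem: "t \<in> fbset K f t' \<Longrightarrow> fbset K f t = fbset K f t'"
  by (auto simp: fbset_def split: if_splits)

lemma mem_fbset_commute: "t \<in> K \<Longrightarrow> t' \<in> K \<Longrightarrow> t \<in> fbset K f t' \<longleftrightarrow> t' \<in> fbset K f t"
  by (auto simp: fbset_def)

lemma loss_eq: "loss lam \<alpha> f c t = (if t \<le> f then lam * c / (1 + lam) else (1 + lam * \<alpha>) / (1 + lam))"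
  by (auto simp: loss_def)

lemma loss_eq_if_mem_fbset: "t \<in> fbset K f t' \<Longrightarrow> loss lam \<alpha> f c t = loss lam \<alpha> f c t'"
  by (auto simp: loss_eq fbset_def split: if_splits)

lemma loss_bounds:
  assumes "0 \<le> lam" "0 \<le> c" "c \<le> 1" "0 \<le> \<alpha>" "\<alpha> \<le> 1"
  shows "0 \<le> loss lam \<alpha> f c t" "loss lam \<alpha> f c t \<le> 1"
  using assms mult_left_le_one_le[of lam c] mult_left_le_one_le[of lam \<alpha>]
  by (auto simp: loss_eq field_simps)

lemma est_loss_eq:
  "est_loss K g p l f t' t = (if t \<in> fbset K f t' then l t / (g + sum p (fbset K f t')) else 0)"
proof -
  have "(\<Sum>tb\<in>fbset K f t'. if t \<in> fbset K f tb then p tb else 0) = sum p (fbset K f t')"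
    if "t \<in> fbset K f t'"
    using that fbset_eq_if_mem by (intro sum.cong) auto
  then show ?thesis by (simp add: est_loss_def)
qed

lemma sum_fbset_nonneg:
  fixes p :: "real \<Rightarrow> real"
  shows "(\<And>t. t \<in> K \<Longrightarrow> 0 \<le> p t) \<Longrightarrow> 0 \<le> sum p (fbset K f t')"
  by (intro sum_nonneg) (meson fbset_subset subsetD)

lemma est_loss_nonneg:
  fixes p l :: "real \<Rightarrow> real"
  assumes "0 < g" "\<And>t. t \<in> K \<Longrightarrow> 0 \<le> p t" "0 \<le> l t"
  shows "0 \<le> est_loss K g p l f t' t"
  using assms sum_fbset_nonneg[of K p f t'] by (simp add: est_loss_eq)

lemma sum_mult_est_loss_eq:
  fixes p l :: "real \<Rightarrow> real" and g :: real
  assumes "finite K" and p: "\<And>t. t \<in> K \<Longrightarrow> 0 \<le> p t" and "0 < g"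
    and cell: "\<And>t. t \<in> fbset K f t' \<Longrightarrow> l t = l t'"
  shows "(\<Sum>t\<in>K. p t * est_loss K g p l f t' t)
           = l t' - g * (l t' / (g + sum p (fbset K f t')))"
proof -
  let ?S = "fbset K f t'"
  have "(\<Sum>t\<in>K. p t * est_loss K g p l f t' t) = (\<Sum>t\<in>K. if t \<in> ?S then p t * (l t' / (g + sum p ?S)) else 0)"
    using cell by (intro sum.cong) (auto simp: est_loss_eq)
  also have "\<dots> = (\<Sum>t\<in>?S. p t * (l t' / (g + sum p ?S)))"
    using \<open>finite K\<close> fbset_subset[of K f t'] by (simp add: sum.If_cases Int_absorb1)
  also have "\<dots> = sum p ?S * (l t' / (g + sum p ?S))"
    by (rule sum_distrib_right[symmetric])
  also have "\<dots> = l t' - g * (l t' / (g + sum p ?S))"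
    using sum_fbset_nonneg[of K p f t'] p \<open>0 < g\<close> by (simp add: field_simps add_pos_nonneg)
  finally show ?thesis .
qed

lemma sum_mult_est_loss_sq_le:
  fixes p l :: "real \<Rightarrow> real" and g :: real
  assumes "finite K" and p: "\<And>t. t \<in> K \<Longrightarrow> 0 \<le> p t" and "0 < g"
    and cell: "\<And>t. t \<in> fbset K f t' \<Longrightarrow> l t = l t'" and "0 \<le> l t'" "l t' \<le> 1"
  shows "(\<Sum>t\<in>K. p t * (est_loss K g p l f t' t)^2) \<le> l t' / (g + sum p (fbset K f t'))"
proof -
  let ?S = "fbset K f t'"
  define x where "x = l t' / (g + sum p ?S)"
  have PS: "0 \<le> sum p ?S" using p by (rule sum_fbset_nonneg)
  have "(\<Sum>t\<in>K. p t * (est_loss K g p l f t' t)^2) = (\<Sum>t\<in>K. if t \<in> ?S then p t * x^2 else 0)"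
    using cell by (intro sum.cong) (auto simp: est_loss_eq x_def)
  also have "\<dots> = (\<Sum>t\<in>?S. p t * x^2)"
    using \<open>finite K\<close> fbset_subset[of K f t'] by (simp add: sum.If_cases Int_absorb1)
  also have "\<dots> = (sum p ?S * x) * x"
    by (simp add: sum_distrib_right[symmetric] power2_eq_square)
  also have "\<dots> \<le> 1 * x"
  proof (rule mult_right_mono)
    have "sum p ?S * l t' \<le> g + sum p ?S"
      using PS \<open>0 < g\<close> \<open>l t' \<le> 1\<close> mult_left_le[of "l t'" "sum p ?S"] by linarith
    then show "sum p ?S * x \<le> 1"
      using PS \<open>0 < g\<close> by (simp add: x_def field_simps)
    show "0 \<le> x" using PS \<open>0 < g\<close> \<open>0 \<le> l t'\<close> by (simp add: x_def)
  qed
  finally show ?thesis by (simp add: x_def)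
qed

text \<open>The estimate of \<open>l \<tau>\<close> is nonzero exactly when the drawn \<open>t'\<close> lies in the cell of \<open>\<tau>\<close>,
  which happens with probability \<open>P = sum p (fbset K f \<tau>)\<close>.\<close>
lemma sum_mult_exp_est_loss_le_1:
  fixes p l :: "real \<Rightarrow> real" and g :: real
  assumes "finite K" and "\<tau> \<in> K" and p: "\<And>t. t \<in> K \<Longrightarrow> 0 \<le> p t" and "sum p K = 1" and "0 < g"
    and "0 \<le> l \<tau>" "l \<tau> \<le> 1"
  shows "(\<Sum>t'\<in>K. p t' * exp (2 * g * (est_loss K g p l f t' \<tau> - l \<tau>))) \<le> 1"
proof -
  let ?S = "fbset K f \<tau>"
  let ?P = "sum p ?S"
  define E where "E = exp (- (2 * g * l \<tau>))"
  have "(\<Sum>t'\<in>K. p t' * exp (2 * g * (est_loss K g p l f t' \<tau> - l \<tau>)))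
      = (\<Sum>t'\<in>K. if t' \<in> ?S then p t' * (exp (2 * g * l \<tau> / (g + ?P)) * E) else p t' * E)"
  proof (intro sum.cong refl)
    fix t' assume "t' \<in> K"
    then show "p t' * exp (2 * g * (est_loss K g p l f t' \<tau> - l \<tau>))
        = (if t' \<in> ?S then p t' * (exp (2 * g * l \<tau> / (g + ?P)) * E) else p t' * E)"
      using mem_fbset_commute[OF \<open>\<tau> \<in> K\<close> \<open>t' \<in> K\<close>, of f] fbset_eq_if_mem[of t' K f \<tau>]
      by (auto simp: est_loss_eq E_def right_diff_distrib exp_diff exp_minus field_simps)
  qed
  also have "\<dots> = ?P * (exp (2 * g * l \<tau> / (g + ?P)) * E) + sum p (K - ?S) * E"
    using \<open>finite K\<close> fbset_subset[of K f \<tau>]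
    by (simp add: sum.If_cases sum_distrib_right Int_absorb1 Diff_eq)
  also have "\<dots> = E * (?P * exp (2 * g * l \<tau> / (g + ?P)) + (1 - ?P))"
    using \<open>finite K\<close> fbset_subset[of K f \<tau>] \<open>sum p K = 1\<close>
    by (simp add: sum_diff algebra_simps)
  also have "\<dots> \<le> E * (1 + 2 * g * l \<tau>)"
    using mult_exp_ix_le[OF sum_fbset_nonneg[of K p f \<tau>] \<open>0 \<le> l \<tau>\<close> \<open>l \<tau> \<le> 1\<close> \<open>0 < g\<close>] p
    by (intro mult_left_mono) (auto simp: E_def)
  also have "\<dots> \<le> E * exp (2 * g * l \<tau>)"
    by (intro mult_left_mono) (auto simp: E_def)
  also have "\<dots> = 1" by (simp add: E_def exp_minus field_simps)
  finally show ?thesis .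
qed

lemma sum_mult_exp_cell_le:
  fixes p l :: "real \<Rightarrow> real" and g :: real
  assumes "finite S" and p: "\<And>t. t \<in> S \<Longrightarrow> 0 \<le> p t" and l: "\<And>t. t \<in> S \<Longrightarrow> l t \<le> 1" and "0 < g"
  shows "(\<Sum>t\<in>S. p t * exp (2 * g * l t / (g + sum p S))) \<le> sum p S + 2 * g"
proof -
  have PS: "0 \<le> sum p S" using p by (intro sum_nonneg) auto
  have "(\<Sum>t\<in>S. p t * exp (2 * g * l t / (g + sum p S))) \<le> (\<Sum>t\<in>S. p t * exp (2 * g * 1 / (g + sum p S)))"
    using p l PS \<open>0 < g\<close> by (intro sum_mono mult_left_mono) (auto simp: divide_right_mono)
  also have "\<dots> = sum p S * exp (2 * g * 1 / (g + sum p S))"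
    by (simp add: sum_distrib_right)
  also have "\<dots> \<le> sum p S + 2 * g * 1"
    using PS \<open>0 < g\<close> by (intro mult_exp_ix_le) auto
  finally show ?thesis by simp
qed

text \<open>The two feedback cells \<open>{t. t \<le> f}\<close> and \<open>{t. f < t}\<close> each contribute at most \<open>2 g\<close>
  to the exponential moment, whence the centring constant \<open>2\<close>.\<close>
lemma sum_mult_exp_variance_term_le_1:
  fixes p l :: "real \<Rightarrow> real" and g :: real
  assumes "finite K" and p: "\<And>t. t \<in> K \<Longrightarrow> 0 \<le> p t" and "sum p K = 1" and "0 < g"
    and l: "\<And>t. t \<in> K \<Longrightarrow> l t \<le> 1"
  shows "(\<Sum>t\<in>K. p t * exp (2 * g * (l t / (g + sum p (fbset K f t)) - 2))) \<le> 1"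
proof -
  define A where "A = {t\<in>K. t \<le> f}"
  define B where "B = {t\<in>K. \<not> t \<le> f}"
  define E where "E = exp (- (4 * g))"
  have K: "K = A \<union> B" "A \<inter> B = {}" and fin: "finite A" "finite B"
    using \<open>finite K\<close> by (auto simp: A_def B_def)
  have "(\<Sum>t\<in>K. p t * exp (2 * g * (l t / (g + sum p (fbset K f t)) - 2)))
      = E * ((\<Sum>t\<in>A. p t * exp (2 * g * l t / (g + sum p A)))
             + (\<Sum>t\<in>B. p t * exp (2 * g * l t / (g + sum p B))))"
  proof -
    have "fbset K f t = A" if "t \<in> A" for t using that by (auto simp: fbset_def A_def)
    moreover have "fbset K f t = B" if "t \<in> B" for t using that by (auto simp: fbset_def B_def)
    moreover have "exp (2 * g * (x - 2)) = E * exp (2 * g * x)" for x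
      by (simp add: E_def mult_exp_exp right_diff_distrib)
    ultimately have "(\<Sum>t\<in>S. p t * exp (2 * g * (l t / (g + sum p (fbset K f t)) - 2)))
        = E * (\<Sum>t\<in>S. p t * exp (2 * g * l t / (g + sum p S)))" if "S = A \<or> S = B" for S
      using that by (auto simp: sum_distrib_left intro!: sum.cong)
    then show ?thesis
      unfolding K(1) using fin K(2) by (simp add: sum.union_disjoint distrib_left)
  qed
  also have "\<dots> \<le> E * ((sum p A + 2 * g) + (sum p B + 2 * g))"
    using fin p l \<open>0 < g\<close> unfolding K(1)
    by (intro mult_left_mono add_mono sum_mult_exp_cell_le) (auto simp: E_def)
  also have "\<dots> = E * (1 + 4 * g)"
    using \<open>sum p K = 1\<close> fin K by (simp add: sum.union_disjoint)
  also have "\<dots> \<le> E * exp (4 * g)"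
    by (intro mult_left_mono) (auto simp: E_def)
  also have "\<dots> = 1" by (simp add: E_def exp_minus field_simps)
  finally show ?thesis .
qed

lemma cumL_take:
  "n \<le> m \<Longrightarrow> cumL Hs \<eta> \<gamma> lam \<alpha> F Cf (take m h) n = cumL Hs \<eta> \<gamma> lam \<alpha> F Cf h n"
  by (induction n) (auto simp: min_def)

lemma exaul_p_take:
  "n \<le> m \<Longrightarrow> exaul_p Hs \<eta> \<gamma> lam \<alpha> F Cf (take m h) n = exaul_p Hs \<eta> \<gamma> lam \<alpha> F Cf h n"
  by (simp add: exaul_p_def cumL_take)

lemma exaul_p_append:
  "n \<le> length h \<Longrightarrow> exaul_p Hs \<eta> \<gamma> lam \<alpha> F Cf (h @ h') n
     = exaul_p Hs \<eta> \<gamma> lam \<alpha> F Cf h n"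
  using exaul_p_take[of n "length h" Hs \<eta> \<gamma> lam \<alpha> F Cf "h @ h'"] by simp

lemma cumL_eq_sum:
  "cumL Hs \<eta> \<gamma> lam \<alpha> F Cf h n = (\<lambda>t. \<Sum>m<n.
     est_loss Hs \<gamma> (exaul_p Hs \<eta> \<gamma> lam \<alpha> F Cf (take m h) m)
       (loss lam \<alpha> (F (take m h)) (Cf (take m h))) (F (take m h)) (h ! m) t)"
proof -
  have "cumL Hs \<eta> \<gamma> lam \<alpha> F Cf h n = (\<lambda>t. \<Sum>m<n.
     est_loss Hs \<gamma> (exaul_p Hs \<eta> \<gamma> lam \<alpha> F Cf h m)
       (loss lam \<alpha> (F (take m h)) (Cf (take m h))) (F (take m h)) (h ! m) t)"
    by (induction n) (simp_all add: exaul_p_def)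
  then show ?thesis by (simp add: exaul_p_take)
qed

lemma exaul_p_nonneg: "0 \<le> exaul_p Hs \<eta> \<gamma> lam \<alpha> F Cf h n t"
  by (simp add: exaul_p_def expw_def sum_nonneg)

lemma sum_expw:
  assumes "finite K" "K \<noteq> {}"
  shows "sum (expw K \<eta> L) K = 1"
proof -
  have "0 < (\<Sum>t\<in>K. exp (- \<eta> * L t))" using assms by (intro sum_pos) auto
  then show ?thesis by (simp add: expw_def sum_divide_distrib[symmetric])
qed

lemma sum_exaul_p: "finite K \<Longrightarrow> K \<noteq> {} \<Longrightarrow> sum (exaul_p K \<eta> \<gamma> lam \<alpha> F Cf h n) K = 1"
  by (simp add: exaul_p_def sum_expw)

definition histories :: "'a set \<Rightarrow> nat \<Rightarrow> 'a list set" where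
  "histories K n = {h. set h \<subseteq> K \<and> length h = n}"

lemma histories_0: "histories K 0 = {[]}"
  by (auto simp: histories_def)

lemma histories_Suc: "histories K (Suc n) = (\<lambda>(h, t). h @ [t]) ` (histories K n \<times> K)"
proof
  show "histories K (Suc n) \<subseteq> (\<lambda>(h, t). h @ [t]) ` (histories K n \<times> K)"
  proof
    fix h assume h: "h \<in> histories K (Suc n)"
    then have "h \<noteq> []" by (auto simp: histories_def)
    with h have "h = butlast h @ [last h]" "butlast h \<in> histories K n" "last h \<in> K"
      by (auto simp: histories_def dest: in_set_butlastD)
    then show "h \<in> (\<lambda>(h, t). h @ [t]) ` (histories K n \<times> K)" by force
  qed
qed (auto simp: histories_def)

lemma sum_histories_Suc:
  "finite K \<Longrightarrow> (\<Sum>h\<in>histories K (Suc n). g h) = (\<Sum>h\<in>histories K n. \<Sum>t\<in>K. g (h @ [t]))"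
  unfolding histories_Suc
  by (subst sum.reindex) (auto simp: inj_on_def sum.cartesian_product case_prod_beta)

lemma seq_prob_snoc:
  "length h = n \<Longrightarrow> seq_prob Hs \<eta> \<gamma> lam \<alpha> F Cf (Suc n) (h @ [t])
     = seq_prob Hs \<eta> \<gamma> lam \<alpha> F Cf n h * exaul_p Hs \<eta> \<gamma> lam \<alpha> F Cf h n t"
  unfolding seq_prob_def
  by (auto simp: exaul_p_append nth_append intro!: prod.cong)

lemma seq_prob_nonneg: "0 \<le> seq_prob Hs \<eta> \<gamma> lam \<alpha> F Cf n h"
  by (simp add: seq_prob_def prod_nonneg exaul_p_nonneg)

lemma sum_seq_prob:
  assumes "finite K" "K \<noteq> {}"
  shows "(\<Sum>h\<in>histories K T. seq_prob K \<eta> \<gamma> lam \<alpha> F Cf T h) = 1"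
proof (induction T)
  case 0
  then show ?case by (simp add: histories_0 seq_prob_def)
next
  case (Suc T)
  have "(\<Sum>h\<in>histories K (Suc T). seq_prob K \<eta> \<gamma> lam \<alpha> F Cf (Suc T) h)
      = (\<Sum>h\<in>histories K T. seq_prob K \<eta> \<gamma> lam \<alpha> F Cf T h * sum (exaul_p K \<eta> \<gamma> lam \<alpha> F Cf h T) K)"
    unfolding sum_histories_Suc[OF assms(1)]
    by (intro sum.cong) (simp_all add: seq_prob_snoc histories_def sum_distrib_left)
  then show ?case using Suc assms by (simp add: sum_exaul_p)
qed

lemma sum_seq_prob_exp_le_1:
  fixes Z :: "real list \<Rightarrow> real \<Rightarrow> real"
  assumes "finite K"
    and step: "\<And>h. set h \<subseteq> K \<Longrightarrow>
      (\<Sum>t\<in>K. exaul_p K \<eta> \<gamma> lam \<alpha> F Cf h (length h) t * exp (Z h t)) \<le> 1"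
  shows "(\<Sum>h\<in>histories K T. seq_prob K \<eta> \<gamma> lam \<alpha> F Cf T h * exp (\<Sum>n<T. Z (take n h) (h ! n))) \<le> 1"
proof (induction T)
  case 0
  then show ?case by (simp add: histories_0 seq_prob_def)
next
  case (Suc T)
  let ?P = "seq_prob K \<eta> \<gamma> lam \<alpha> F Cf"
  let ?E = "\<lambda>h. exp (\<Sum>n<T. Z (take n h) (h ! n))"
  have path: "(\<Sum>n<Suc T. Z (take n (h @ [t])) ((h @ [t]) ! n)) = (\<Sum>n<T. Z (take n h) (h ! n)) + Z h t"
    if "length h = T" for h t
    using that by (auto simp: nth_append intro!: sum.cong)
  have "(\<Sum>h\<in>histories K (Suc T). ?P (Suc T) h * exp (\<Sum>n<Suc T. Z (take n h) (h ! n)))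
      = (\<Sum>h\<in>histories K T. ?P T h * ?E h
           * (\<Sum>t\<in>K. exaul_p K \<eta> \<gamma> lam \<alpha> F Cf h (length h) t * exp (Z h t)))"
    unfolding sum_histories_Suc[OF \<open>finite K\<close>]
  proof (intro sum.cong refl)
    fix h assume "h \<in> histories K T"
    then have "length h = T" by (simp add: histories_def)
    then show "(\<Sum>t\<in>K. ?P (Suc T) (h @ [t]) * exp (\<Sum>n<Suc T. Z (take n (h @ [t])) ((h @ [t]) ! n)))
        = ?P T h * ?E h * (\<Sum>t\<in>K. exaul_p K \<eta> \<gamma> lam \<alpha> F Cf h (length h) t * exp (Z h t))"
      by (simp only: path seq_prob_snoc) (simp add: exp_add sum_distrib_left algebra_simps)
  qed
  also have "\<dots> \<le> (\<Sum>h\<in>histories K T. ?P T h * ?E h * 1)"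
    by (intro sum_mono mult_left_mono step) (auto simp: histories_def seq_prob_nonneg)
  finally show ?case using Suc by simp
qed

lemma exp_weights_regret:
  fixes e :: "nat \<Rightarrow> real \<Rightarrow> real" and K :: "real set" and \<eta> :: real
  defines "p \<equiv> \<lambda>n. expw K \<eta> (\<lambda>t. \<Sum>m<n. e m t)"
  assumes K: "finite K" "K \<noteq> {}" and "0 < \<eta>" and e: "\<And>n t. t \<in> K \<Longrightarrow> 0 \<le> e n t"
    and "t0 \<in> K"
  shows "\<eta> * (\<Sum>n<T. \<Sum>t\<in>K. p n t * e n t)
           \<le> ln (card K) + \<eta> * (\<Sum>n<T. e n t0) + \<eta>^2 / 2 * (\<Sum>n<T. \<Sum>t\<in>K. p n t * (e n t)^2)"
proof -
  define L where "L n t = (\<Sum>m<n. e m t)" for n t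
  define W where "W n = (\<Sum>t\<in>K. exp (- \<eta> * L n t))" for n
  define a where "a n = - \<eta> * (\<Sum>t\<in>K. p n t * e n t) + \<eta>^2 / 2 * (\<Sum>t\<in>K. p n t * (e n t)^2)" for n
  have W_pos: "0 < W n" for n
    using K by (simp add: W_def sum_pos)
  have weight: "exp (- \<eta> * L n t) = W n * p n t" for n t
    using W_pos[of n] by (simp add: p_def expw_def W_def L_def)
  have W_Suc: "W (Suc n) \<le> W n * exp (a n)" for n
  proof -
    have "W (Suc n) = (\<Sum>t\<in>K. exp (- \<eta> * L n t) * exp (- (\<eta> * e n t)))"
      by (simp add: W_def L_def exp_add[symmetric] algebra_simps)
    also have "\<dots> \<le> (\<Sum>t\<in>K. exp (- \<eta> * L n t) * (1 - \<eta> * e n t + (\<eta> * e n t)^2 / 2))"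
      using \<open>0 < \<eta>\<close> e by (intro sum_mono mult_left_mono exp_minus_le_quadratic) auto
    also have "\<dots> = (\<Sum>t\<in>K. W n * (p n t - \<eta> * (p n t * e n t) + \<eta>^2 / 2 * (p n t * (e n t)^2)))"
      by (intro sum.cong refl) (simp only: weight, simp add: algebra_simps power_mult_distrib)
    also have "\<dots> = W n * (sum (p n) K + a n)"
      by (simp add: a_def sum_distrib_left sum.distrib sum_subtractf sum_negf sum_divide_distrib algebra_simps)
    also have "\<dots> \<le> W n * exp (a n)"
      using W_pos[of n] K by (simp add: p_def sum_expw add.commute exp_ge_add_one_self)
    finally show ?thesis .
  qed
  have W_le: "W n \<le> card K * exp (\<Sum>m<n. a m)" for n
  proof (induction n)
    case 0
    then show ?case by (simp add: W_def L_def)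
  next
    case (Suc n)
    then show ?case
      using W_Suc[of n] by (auto simp: exp_add intro: order_trans mult_right_mono)
  qed
  have "exp (- \<eta> * (\<Sum>n<T. e n t0)) \<le> W T"
    unfolding W_def L_def using K \<open>t0 \<in> K\<close> by (intro member_le_sum) auto
  also note W_le[of T]
  finally have "- \<eta> * (\<Sum>n<T. e n t0) \<le> ln (card K) + (\<Sum>m<T. a m)"
    using K by (simp add: ln_ge_iff[symmetric] ln_mult card_gt_0_iff)
  moreover have "(\<Sum>m<T. a m) = - \<eta> * (\<Sum>n<T. \<Sum>t\<in>K. p n t * e n t)
      + \<eta>^2 / 2 * (\<Sum>n<T. \<Sum>t\<in>K. p n t * (e n t)^2)"
    by (simp add: a_def sum.distrib sum_distrib_left)
  ultimately show ?thesis by linarith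
qed

lemma markov_inequality_finite_sum:
  fixes w Y :: "'a \<Rightarrow> real"
  assumes "finite S" and w: "\<And>x. x \<in> S \<Longrightarrow> 0 \<le> w x" and "sum w S = 1"
    and Y: "\<And>x. x \<in> S \<Longrightarrow> 0 \<le> Y x" and mean: "(\<Sum>x\<in>S. w x * Y x) \<le> 1"
    and "0 < \<delta>" and bad: "\<And>x. x \<in> S \<Longrightarrow> \<not> P x \<Longrightarrow> 1 \<le> \<delta> * Y x"
  shows "1 - \<delta> \<le> (\<Sum>x\<in>S. if P x then w x else 0)"
proof -
  have "1 - \<delta> \<le> 1 - \<delta> * (\<Sum>x\<in>S. w x * Y x)"
    using mean \<open>0 < \<delta>\<close> by (simp add: mult_left_le)
  also have "\<dots> = (\<Sum>x\<in>S. w x - \<delta> * (w x * Y x))"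
    using \<open>sum w S = 1\<close> by (simp add: sum_subtractf sum_distrib_left)
  also have "\<dots> \<le> (\<Sum>x\<in>S. if P x then w x else 0)"
  proof (intro sum_mono)
    fix x assume x: "x \<in> S"
    show "w x - \<delta> * (w x * Y x) \<le> (if P x then w x else 0)"
    proof (cases "P x")
      case True
      then show ?thesis using w[OF x] Y[OF x] \<open>0 < \<delta>\<close> by simp
    next
      case False
      then have "w x * 1 \<le> w x * (\<delta> * Y x)"
        using bad[OF x] w[OF x] by (intro mult_left_mono)
      then show ?thesis using False by (simp add: algebra_simps)
    qed
  qed
  finally show ?thesis .
qed

lemma regret_arithmetic:
  fixes T log_K b \<eta> \<gamma> est_alg loss_alg loss_best est_best var_sum sq_sum :: real
  assumes T: "0 < T" and log_K: "0 < log_K" and eta: "\<eta> = sqrt (log_K / T)" and gamma: "\<eta> = 2 * \<gamma>"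
    and hedge: "\<eta> * est_alg \<le> log_K + \<eta> * est_best + \<eta>^2 / 2 * sq_sum"
    and "sq_sum \<le> var_sum" and "est_alg = loss_alg - \<gamma> * var_sum"
    and est_dev: "2 * \<gamma> * (est_best - loss_best) < log_K + b" and var_dev: "2 * \<gamma> * (var_sum - 2 * T) < b"
  shows "loss_alg - loss_best \<le> 4 * sqrt (T * log_K) + (1 + sqrt (T / log_K)) * b"
proof -
  have eta_pos: "0 < \<eta>" using T log_K by (simp add: eta)
  have "\<eta>^2 / 2 * sq_sum \<le> \<eta>^2 / 2 * var_sum"
    using \<open>sq_sum \<le> var_sum\<close> by (intro mult_left_mono) auto
  moreover have "\<eta> * (\<eta> * var_sum) \<le> \<eta> * (b + 2 * T * \<eta>)"
    using var_dev eta_pos gamma by (intro mult_left_mono) (auto simp: algebra_simps)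
  ultimately have "\<eta> * (loss_alg - loss_best) \<le> 2 * log_K + 2 * T * \<eta>^2 + b + \<eta> * b"
    using hedge est_dev \<open>est_alg = loss_alg - \<gamma> * var_sum\<close> gamma
    by (simp add: algebra_simps power2_eq_square)
  then have "loss_alg - loss_best \<le> 2 * (log_K / \<eta>) + 2 * (T * \<eta>) + (1 / \<eta>) * b + b"
    using eta_pos by (simp add: pos_le_divide_eq field_simps power2_eq_square)
  moreover have "log_K / \<eta> = sqrt (T * log_K)" "T * \<eta> = sqrt (T * log_K)" "1 / \<eta> = sqrt (T / log_K)"
    using T log_K by (simp_all add: eta real_sqrt_divide real_sqrt_mult field_simps)
  ultimately show ?thesis by (simp add: algebra_simps)
qed

context
  fixes K :: "real set" and \<eta> \<gamma> lam \<alpha> :: real and F Cf :: "real list \<Rightarrow> real"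
  assumes finite_K: "finite K" and K_nonempty: "K \<noteq> {}" and gamma_pos: "0 < \<gamma>"
    and lam_nonneg: "0 \<le> lam" and alpha_nonneg: "0 \<le> \<alpha>" and alpha_le_1: "\<alpha> \<le> 1"
    and feedback_range: "\<And>h. set h \<subseteq> K \<Longrightarrow> 0 \<le> Cf h \<and> Cf h \<le> 1"
begin

text \<open>Quantities of the round that follows history \<open>h\<close>; \<open>t'\<close> is the threshold drawn in it and
  \<open>estimate h t' \<tau>\<close> the estimated loss of \<open>\<tau>\<close>.\<close>

abbreviation weights :: "real list \<Rightarrow> real \<Rightarrow> real" where
  "weights h \<equiv> exaul_p K \<eta> \<gamma> lam \<alpha> F Cf h (length h)"

abbreviation round_loss :: "real list \<Rightarrow> real \<Rightarrow> real" where
  "round_loss h \<equiv> loss lam \<alpha> (F h) (Cf h)"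

abbreviation estimate :: "real list \<Rightarrow> real \<Rightarrow> real \<Rightarrow> real" where
  "estimate h t' \<equiv> est_loss K \<gamma> (weights h) (round_loss h) (F h) t'"

abbreviation variance_term :: "real list \<Rightarrow> real \<Rightarrow> real" where
  "variance_term h t' \<equiv> round_loss h t' / (\<gamma> + sum (weights h) (fbset K (F h) t'))"

lemma round_loss_bounds:
  assumes "set h \<subseteq> K"
  shows "0 \<le> round_loss h t" "round_loss h t \<le> 1"
  using feedback_range[OF assms] loss_bounds[OF lam_nonneg _ _ alpha_nonneg alpha_le_1] by auto

lemma sum_seq_prob_exp_estimate_le_1:
  assumes "\<tau> \<in> K"
  shows "(\<Sum>h\<in>histories K T. seq_prob K \<eta> \<gamma> lam \<alpha> F Cf T h
           * exp (\<Sum>n<T. 2 * \<gamma> * (estimate (take n h) (h ! n) \<tau> - round_loss (take n h) \<tau>))) \<le> 1"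
  using finite_K
proof (rule sum_seq_prob_exp_le_1)
  fix h :: "real list"
  assume "set h \<subseteq> K"
  then show "(\<Sum>t\<in>K. weights h t * exp (2 * \<gamma> * (estimate h t \<tau> - round_loss h \<tau>))) \<le> 1"
    using assms finite_K K_nonempty gamma_pos round_loss_bounds
    by (intro sum_mult_exp_est_loss_le_1) (auto simp: exaul_p_nonneg sum_exaul_p)
qed

lemma sum_seq_prob_exp_variance_le_1:
  "(\<Sum>h\<in>histories K T. seq_prob K \<eta> \<gamma> lam \<alpha> F Cf T h
     * exp (\<Sum>n<T. 2 * \<gamma> * (variance_term (take n h) (h ! n) - 2))) \<le> 1"
  using finite_K
proof (rule sum_seq_prob_exp_le_1)
  fix h :: "real list"
  assume "set h \<subseteq> K"
  then show "(\<Sum>t\<in>K. weights h t * exp (2 * \<gamma> * (variance_term h t - 2))) \<le> 1"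
    using finite_K K_nonempty gamma_pos round_loss_bounds
    by (intro sum_mult_exp_variance_term_le_1) (auto simp: exaul_p_nonneg sum_exaul_p)
qed

lemma weights_take_eq_expw:
  assumes "length h = T" "n \<le> T"
  shows "weights (take n h) = expw K \<eta> (\<lambda>t. \<Sum>m<n. estimate (take m h) (h ! m) t)"
proof -
  have "weights (take n h) = expw K \<eta> (cumL K \<eta> \<gamma> lam \<alpha> F Cf h n)"
    using assms by (simp add: exaul_p_def cumL_take min_def)
  also have "cumL K \<eta> \<gamma> lam \<alpha> F Cf h n = (\<lambda>t. \<Sum>m<n. estimate (take m h) (h ! m) t)"
    using assms by (auto simp: cumL_eq_sum min_def intro!: sum.cong)
  finally show ?thesis .
qed

lemma regret_le_of_deviations:
  assumes h: "h \<in> histories K T" and T: "0 < T" and card: "2 \<le> card K"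
    and eta: "\<eta> = sqrt (ln (card K) / T)" and gamma: "\<eta> = 2 * \<gamma>"
    and est_dev: "\<And>\<tau>. \<tau> \<in> K \<Longrightarrow>
      (\<Sum>n<T. 2 * \<gamma> * (estimate (take n h) (h ! n) \<tau> - round_loss (take n h) \<tau>)) < ln (card K) + b"
    and var_dev: "(\<Sum>n<T. 2 * \<gamma> * (variance_term (take n h) (h ! n) - 2)) < b"
  shows "regret K lam \<alpha> F Cf T h \<le> 4 * sqrt (T * ln (card K)) + (1 + sqrt (T / ln (card K))) * b"
proof -
  have len: "length h = T" and take_K: "set (take n h) \<subseteq> K" for n
    using h set_take_subset[of n h] by (auto simp: histories_def)
  have drawn_K: "h ! n \<in> K" if "n < T" for n
    using h that by (auto simp: histories_def)
  let ?p = "\<lambda>n. weights (take n h)"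
  let ?e = "\<lambda>n. estimate (take n h) (h ! n)"
  let ?l = "\<lambda>n. round_loss (take n h)"
  let ?v = "\<lambda>n. variance_term (take n h) (h ! n)"
  have p_nonneg: "0 \<le> ?p n t" for n t by (simp add: exaul_p_nonneg)
  have cell: "\<And>t. t \<in> fbset K (F (take n h)) (h ! n) \<Longrightarrow> ?l n t = ?l n (h ! n)" for n
    by (rule loss_eq_if_mem_fbset)
  have "(MIN \<tau>\<in>K. \<Sum>n<T. ?l n \<tau>) \<in> (\<lambda>\<tau>. \<Sum>n<T. ?l n \<tau>) ` K"
    using finite_K K_nonempty by (intro Min_in) auto
  then obtain \<tau>0 where "\<tau>0 \<in> K" and min: "(MIN \<tau>\<in>K. \<Sum>n<T. ?l n \<tau>) = (\<Sum>n<T. ?l n \<tau>0)"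
    by auto
  have hedge: "\<eta> * (\<Sum>n<T. \<Sum>t\<in>K. ?p n t * ?e n t)
      \<le> ln (card K) + \<eta> * (\<Sum>n<T. ?e n \<tau>0) + \<eta>^2 / 2 * (\<Sum>n<T. \<Sum>t\<in>K. ?p n t * (?e n t)^2)"
  proof -
    have "0 < \<eta>" using T card by (simp add: eta)
    moreover have "0 \<le> ?e n t" for n t
      using gamma_pos round_loss_bounds[OF take_K] by (intro est_loss_nonneg) (auto simp: exaul_p_nonneg)
    ultimately show ?thesis
      using exp_weights_regret[OF finite_K K_nonempty _ _ \<open>\<tau>0 \<in> K\<close>, of \<eta> ?e T] weights_take_eq_expw[OF len]
      by simp
  qed
  have mean: "(\<Sum>t\<in>K. ?p n t * ?e n t) = ?l n (h ! n) - \<gamma> * ?v n" for n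
    using finite_K p_nonneg gamma_pos cell by (rule sum_mult_est_loss_eq)
  have second_moment: "(\<Sum>t\<in>K. ?p n t * (?e n t)^2) \<le> ?v n" for n
    using finite_K p_nonneg gamma_pos cell round_loss_bounds[OF take_K] by (rule sum_mult_est_loss_sq_le)
  have "regret K lam \<alpha> F Cf T h = (\<Sum>n<T. ?l n (h ! n)) - (\<Sum>n<T. ?l n \<tau>0)"
    using min by (simp add: regret_def)
  also have "\<dots> \<le> 4 * sqrt (T * ln (card K)) + (1 + sqrt (T / ln (card K))) * b"
  proof (rule regret_arithmetic[OF _ _ eta gamma hedge])
    show "0 < real T" "0 < ln (real (card K))" using T card by auto
    show "(\<Sum>n<T. \<Sum>t\<in>K. ?p n t * (?e n t)^2) \<le> (\<Sum>n<T. ?v n)"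
      by (intro sum_mono second_moment)
    show "(\<Sum>n<T. \<Sum>t\<in>K. ?p n t * ?e n t) = (\<Sum>n<T. ?l n (h ! n)) - \<gamma> * (\<Sum>n<T. ?v n)"
      by (simp only: mean sum_subtractf sum_distrib_left)
    show "2 * \<gamma> * ((\<Sum>n<T. ?e n \<tau>0) - (\<Sum>n<T. ?l n \<tau>0)) < ln (card K) + b"
      using est_dev[OF \<open>\<tau>0 \<in> K\<close>] by (simp add: sum_subtractf sum_distrib_left[symmetric])
    show "2 * \<gamma> * ((\<Sum>n<T. ?v n) - 2 * real T) < b"
      using var_dev by (simp add: sum_subtractf sum_distrib_left[symmetric] mult.commute[of 2])
  qed
  finally show ?thesis .
qed

text \<open>Markov's inequality for a mixture \<open>Y\<close> of the exponentials of the two deviations: \<open>Y\<close> has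
  mean at most \<open>1\<close>, and \<open>\<delta> Y < 1\<close> forces each deviation below its threshold.\<close>
lemma regret_bound_with_high_probability:
  assumes card: "2 \<le> card K" and T: "0 < T" and "0 < \<delta>"
    and eta: "\<eta> = sqrt (ln (card K) / T)" and gamma: "\<eta> = 2 * \<gamma>"
  shows "1 - \<delta> \<le> (\<Sum>h\<in>histories K T.
           if regret K lam \<alpha> F Cf T h \<le> 4 * sqrt (T * ln (card K)) + (1 + sqrt (T / ln (card K))) * ln (2 / \<delta>)
           then seq_prob K \<eta> \<gamma> lam \<alpha> F Cf T h else 0)"
proof -
  define Xe where "Xe \<tau> h = (\<Sum>n<T. 2 * \<gamma> * (estimate (take n h) (h ! n) \<tau> - round_loss (take n h) \<tau>))"
    for \<tau> h
  define Xv where "Xv h = (\<Sum>n<T. 2 * \<gamma> * (variance_term (take n h) (h ! n) - 2))" for h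
  define Y where "Y h = (\<Sum>\<tau>\<in>K. exp (Xe \<tau> h)) / (2 * card K) + exp (Xv h) / 2" for h
  let ?P = "seq_prob K \<eta> \<gamma> lam \<alpha> F Cf T"
  have card_pos: "0 < real (card K)" using card by simp
  show ?thesis
  proof (rule markov_inequality_finite_sum[where Y = Y])
    show "finite (histories K T)"
      unfolding histories_def using finite_K by (rule finite_lists_length_eq)
    show "sum ?P (histories K T) = 1"
      using finite_K K_nonempty by (rule sum_seq_prob)
    show "0 \<le> ?P h" "0 \<le> Y h" for h
      by (simp_all add: seq_prob_nonneg Y_def sum_nonneg)
    have "(\<Sum>h\<in>histories K T. ?P h * (\<Sum>\<tau>\<in>K. exp (Xe \<tau> h)))
        = (\<Sum>\<tau>\<in>K. \<Sum>h\<in>histories K T. ?P h * exp (Xe \<tau> h))"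
      by (simp add: sum_distrib_left) (rule sum.swap)
    moreover have "(\<Sum>h\<in>histories K T. ?P h * Y h)
        = (\<Sum>h\<in>histories K T. ?P h * (\<Sum>\<tau>\<in>K. exp (Xe \<tau> h))) / (2 * card K)
          + (\<Sum>h\<in>histories K T. ?P h * exp (Xv h)) / 2"
      by (simp add: Y_def distrib_left sum.distrib sum_divide_distrib sum_distrib_left)
    ultimately have "(\<Sum>h\<in>histories K T. ?P h * Y h)
        = (\<Sum>\<tau>\<in>K. \<Sum>h\<in>histories K T. ?P h * exp (Xe \<tau> h)) / (2 * card K)
          + (\<Sum>h\<in>histories K T. ?P h * exp (Xv h)) / 2"
      by simp
    also have "\<dots> \<le> (\<Sum>\<tau>\<in>K. 1) / (2 * card K) + 1 / 2"
      unfolding Xe_def Xv_def using card_pos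
      by (intro add_mono divide_right_mono sum_mono sum_seq_prob_exp_estimate_le_1
          sum_seq_prob_exp_variance_le_1) auto
    also have "\<dots> = 1" using card_pos by simp
    finally show "(\<Sum>h\<in>histories K T. ?P h * Y h) \<le> 1" .
  next
    fix h
    assume h: "h \<in> histories K T"
      and bad: "\<not> regret K lam \<alpha> F Cf T h
                  \<le> 4 * sqrt (T * ln (card K)) + (1 + sqrt (T / ln (card K))) * ln (2 / \<delta>)"
    show "1 \<le> \<delta> * Y h"
    proof (rule ccontr)
      assume "\<not> 1 \<le> \<delta> * Y h"
      then have Y_lt: "Y h < 1 / \<delta>" using \<open>0 < \<delta>\<close> by (simp add: field_simps)
      have "Xe \<tau> h < ln (card K) + ln (2 / \<delta>)" if "\<tau> \<in> K" for \<tau>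
      proof -
        have "exp (Xe \<tau> h) \<le> (\<Sum>\<tau>\<in>K. exp (Xe \<tau> h))"
          using finite_K that by (intro member_le_sum) auto
        also have "\<dots> \<le> 2 * card K * Y h"
          using card_pos by (simp add: Y_def field_simps)
        also have "\<dots> < card K * (2 / \<delta>)"
          using Y_lt card_pos \<open>0 < \<delta>\<close> by (simp add: field_simps)
        finally have "Xe \<tau> h < ln (card K * (2 / \<delta>))"
          using ln_less_cancel_iff[of "exp (Xe \<tau> h)"] card_pos \<open>0 < \<delta>\<close> by simp
        also have "ln (card K * (2 / \<delta>)) = ln (card K) + ln (2 / \<delta>)"
          using card_pos \<open>0 < \<delta>\<close> by (intro ln_mult_pos) auto
        finally show ?thesis .
      qed
      moreover have "Xv h < ln (2 / \<delta>)"
      proof -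
        have "exp (Xv h) \<le> 2 * Y h" by (simp add: Y_def sum_nonneg)
        also have "\<dots> < 2 / \<delta>" using Y_lt by simp
        finally show ?thesis
          using ln_less_cancel_iff[of "exp (Xv h)"] \<open>0 < \<delta>\<close> by simp
      qed
      ultimately show False
        using bad regret_le_of_deviations[OF h T card eta gamma] by (simp add: Xe_def Xv_def)
    qed
  qed (use \<open>0 < \<delta>\<close> in simp)
qed

end

theorem theorem4:
  fixes T H :: nat and \<alpha> lam \<delta> \<eta> \<gamma> :: real
    and f :: "'x \<Rightarrow> 'y \<Rightarrow> real" and G :: "'x \<Rightarrow> 'y"
    and X :: "real list \<Rightarrow> 'x" and C :: "real list \<Rightarrow> real"
  assumes "0 < \<alpha>" "\<alpha> < 1" "lam \<ge> 0" "0 < \<delta>" "\<delta> < 1" "H \<ge> 2"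
    and adv_f: "\<And>h. set h \<subseteq> grid H \<Longrightarrow> 0 \<le> f (X h) (G (X h)) \<and> f (X h) (G (X h)) < 1"
    and adv_c: "\<And>h. set h \<subseteq> grid H \<Longrightarrow> 0 \<le> C h \<and> C h \<le> 1"
    and eta: "\<eta> = sqrt (ln (real (card (grid H))) / real T)"
    and gamma: "\<eta> = 2 * \<gamma>"
  shows "(\<Sum>h\<in>{h. set h \<subseteq> grid H \<and> length h = T}.
            if regret (grid H) lam \<alpha> (\<lambda>h. f (X h) (G (X h))) C T h
               \<le> 4 * sqrt (real T * ln (real (card (grid H))))
                 + (1 + sqrt (real T / ln (real (card (grid H))))) * ln (2 / \<delta>)
            then seq_prob (grid H) \<eta> \<gamma> lam \<alpha> (\<lambda>h. f (X h) (G (X h))) C T h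
            else 0) \<ge> 1 - \<delta>"
proof -
  have card_grid: "card (grid H) = H"
    unfolding grid_def using \<open>H \<ge> 2\<close> by (subst card_image) (auto simp: inj_on_def)
  have grid: "finite (grid H)" "grid H \<noteq> {}"
    using card_grid \<open>H \<ge> 2\<close> by (auto simp: grid_def)
  show ?thesis
  proof (cases "T = 0")
    case True
    then have "{h. set h \<subseteq> grid H \<and> length h = T} = {[]}" by auto
    moreover have "regret (grid H) lam \<alpha> (\<lambda>h. f (X h) (G (X h))) C 0 [] = 0"
      using grid(2) by (simp add: regret_def image_constant_conv)
    moreover have "0 \<le> ln (2 / \<delta>)"
      using \<open>0 < \<delta>\<close> \<open>\<delta> < 1\<close> by simp
    ultimately show ?thesis
      using True \<open>0 < \<delta>\<close> by (simp add: seq_prob_def)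
  next
    case False
    have "0 < \<eta>"
      using False card_grid \<open>H \<ge> 2\<close> by (simp add: eta)
    then have "0 < \<gamma>" using gamma by simp
    show ?thesis
      using regret_bound_with_high_probability
          [OF grid \<open>0 < \<gamma>\<close> \<open>lam \<ge> 0\<close> _ _ adv_c _ _ \<open>0 < \<delta>\<close> eta gamma]
        \<open>0 < \<alpha>\<close> \<open>\<alpha> < 1\<close> \<open>H \<ge> 2\<close> False
      by (simp add: histories_def card_grid)
  qed
qed

end
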